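(* Let $n\ge1$, let $N:[t_0,+\infty)\times\mathbb R^m\to\mathbb R^{m\times m}$ be continuous in $t$ and $n$ times continuously differentiable in $u$ (derivatives continuous in $(t,u)$), and let $\tilde N\in C^n(\mathbb R)$ satisfy $\tilde N^{(k)}(u)\ge0$ for $u\ge0$, $k\in\{0,\dots,n\}$, and $$\sum_{\substack{k_1+\dots+k_m=k\\k_i\ge0}}\frac{k!}{k_1!\cdots k_m!}\Big\|\frac{\partial^kN(t,u)}{\partial u_1^{k_1}\cdots\partial u_m^{k_m}}\Big\|\le\tilde N^{(k)}(\|u\|)\quad\text{for all }(t,u)\in[t_0,\infty)\times\mathbb R^m,\ k\in\{0,\dots,n\}.$$ Then for every $t\ge t_0$: (a) $\|A_k(N(t,\cdot);u_0(t),\dots,u_k(t))\|\le A_k(\tilde N;|||u_0|||_0,\dots,|||u_k|||_0)$ for all $u_0,\dots,u_k\in V_m(\mathbb Q)$, $k\in\{0,\dots,n-1\}$; (b) $\|A_k(N(t,\cdot);u_0(t),\dots,u_k(t))-A_k(N(t,\cdot);P_h(u_0)(t),\dots,P_h(u_k)(t))\|\le h\,A_k(g;|||u_0|||,\dots,|||u_k|||)$ for all $u_0,\dots,u_k\in V_m(\mathbb Q^1_\omega)$, $k\in\{0,\dots,n-2\}$, where $g(u)=\tilde N'(u)u$.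
   Context: $\|\cdot\|$: Euclidean norm on $\mathbb R^m$ and induced operator norm on $\mathbb R^{m\times m}$. $V_m(\mathbb Q)$: bounded piecewise continuous functions $[t_0,\infty)\to\mathbb R^m$, with $|||u|||_0=\sup_{t\ge t_0}\|u(t)\|$. Grid $\hat\omega=\{t_0<t_1<\dots\}$, $t_n\to\infty$, $h=\sup_i(t_i-t_{i-1})$. $V_m(\mathbb Q^1_\omega)$: bounded continuous functions $[t_0,\infty)\to\mathbb R^m$ continuously differentiable on each $(t_{i-1},t_i)$ with finite one-sided derivatives at grid points and bounded derivative; $|||u|||_1=\sup_t\|u'(t)\|$ (sup over points of differentiability/one-sided derivatives), $|||u|||=\max\{|||u|||_0,|||u|||_1\}$. $P_h(u)(t)=u(t_{i-1})$ for $t\in[t_{i-1},t_i)$. Adomian polynomials: $A_k(N(t,\cdot);v_0,\dots,v_k)=\frac1{k!}\frac{d^k}{d\tau^k}N(t,\sum_{i=0}^k\tau^iv_i)|_{\tau=0}$ for $v_i\in\mathbb R^m$; for a real function $f$, $A_k(f;x_0,\dots,x_k)=\frac1{k!}\frac{d^k}{d\tau^k}f(\sum_{i=0}^k\tau^ix_i)|_{\tau=0}$. *)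

theory Defs
  imports "HOL-Analysis.Analysis"
begin

fun vderiv_iter :: "nat \<Rightarrow> (real \<Rightarrow> 'a::real_normed_vector) \<Rightarrow> real \<Rightarrow> 'a" where
  "vderiv_iter 0 f = f"
| "vderiv_iter (Suc k) f = (\<lambda>x. vector_derivative (vderiv_iter k f) (at x))"

definition partial_u :: "'m::finite \<Rightarrow> (real^'m \<Rightarrow> 'a::real_normed_vector) \<Rightarrow> real^'m \<Rightarrow> 'a" where
  "partial_u i F u = vector_derivative (\<lambda>s. F (u + s *\<^sub>R axis i 1)) (at 0)"

text \<open>Iterated partial derivatives along a list of coordinates (last element applied first).\<close>
fun partials :: "'m::finite list \<Rightarrow> (real^'m \<Rightarrow> 'a::real_normed_vector) \<Rightarrow> real^'m \<Rightarrow> 'a" where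
  "partials [] F = F"
| "partials (i # is) F = partial_u i (partials is F)"

text \<open>Mixed partial derivative for a multi-index kappa (kappa i = number of differentiations
  in u_i).  Under the C^n hypothesis the order of differentiation is irrelevant.\<close>
definition mixed_partial :: "('m::finite \<Rightarrow> nat) \<Rightarrow> (real^'m \<Rightarrow> 'a::real_normed_vector) \<Rightarrow> real^'m \<Rightarrow> 'a" where
  "mixed_partial \<kappa> F = partials (SOME is. \<forall>i. count (mset is) i = \<kappa> i) F"

definition mat_norm :: "real^'m^'m \<Rightarrow> real" where
  "mat_norm M = onorm (\<lambda>x. M *v x)"

definition adomian :: "nat \<Rightarrow> ('a::real_normed_vector \<Rightarrow> 'b::real_normed_vector) \<Rightarrow> (nat \<Rightarrow> 'a) \<Rightarrow> 'b" where
  "adomian k F vs = (1 / fact k) *\<^sub>R vderiv_iter k (\<lambda>\<tau>. F (\<Sum>i\<le>k. \<tau> ^ i *\<^sub>R vs i)) 0"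

definition piecewise_continuous :: "real \<Rightarrow> (real \<Rightarrow> 'a::real_normed_vector) \<Rightarrow> bool" where
  "piecewise_continuous t0 u \<longleftrightarrow>
     (\<forall>b. \<exists>S. finite S \<and> (\<forall>x\<in>{t0..b} - S. continuous (at x within {t0..}) u) \<and>
        (\<forall>s\<in>S. (s > t0 \<longrightarrow> (\<exists>l. (u \<longlongrightarrow> l) (at_left s))) \<and> (\<exists>l. (u \<longlongrightarrow> l) (at_right s))))"

definition V0 :: "real \<Rightarrow> (real \<Rightarrow> real^'m) set" where
  "V0 t0 = {u. bounded (u ` {t0..}) \<and> piecewise_continuous t0 u}"

definition norm0 :: "real \<Rightarrow> (real \<Rightarrow> real^'m) \<Rightarrow> real" where
  "norm0 t0 u = (SUP t\<in>{t0..}. norm (u t))"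

text \<open>Grid t0 = grid 0 < grid 1 < ..., tending to infinity, with bounded step sizes
  (so that h is a real number).\<close>
definition is_grid :: "real \<Rightarrow> (nat \<Rightarrow> real) \<Rightarrow> bool" where
  "is_grid t0 grid \<longleftrightarrow> grid 0 = t0 \<and> strict_mono grid \<and> filterlim grid at_top sequentially \<and>
     bdd_above (range (\<lambda>i. grid (Suc i) - grid i))"

definition step_h :: "(nat \<Rightarrow> real) \<Rightarrow> real" where
  "step_h grid = (SUP i. grid (Suc i) - grid i)"

text \<open>Norms of the (one-sided) derivatives on the closed grid intervals; at interior points these are
  the ordinary derivatives, at grid points the left/right derivatives.\<close>
definition deriv_norms :: "(nat \<Rightarrow> real) \<Rightarrow> (real \<Rightarrow> real^'m) \<Rightarrow> real set" where
  "deriv_norms grid u = {norm (vector_derivative u (at x within {grid i..grid (Suc i)})) | i x.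
       x \<in> {grid i..grid (Suc i)}}"

definition V1 :: "real \<Rightarrow> (nat \<Rightarrow> real) \<Rightarrow> (real \<Rightarrow> real^'m) set" where
  "V1 t0 grid = {u. bounded (u ` {t0..}) \<and> continuous_on {t0..} u \<and>
     (\<forall>i. \<forall>x\<in>{grid i..grid (Suc i)}. u differentiable (at x within {grid i..grid (Suc i)})) \<and>
     (\<forall>i. continuous_on {grid i<..<grid (Suc i)} (\<lambda>x. vector_derivative u (at x))) \<and>
     bdd_above (deriv_norms grid u)}"

definition norm1 :: "(nat \<Rightarrow> real) \<Rightarrow> (real \<Rightarrow> real^'m) \<Rightarrow> real" where
  "norm1 grid u = Sup (deriv_norms grid u)"

definition normV :: "real \<Rightarrow> (nat \<Rightarrow> real) \<Rightarrow> (real \<Rightarrow> real^'m) \<Rightarrow> real" where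
  "normV t0 grid u = max (norm0 t0 u) (norm1 grid u)"

definition Ph :: "(nat \<Rightarrow> real) \<Rightarrow> (real \<Rightarrow> 'a) \<Rightarrow> real \<Rightarrow> 'a" where
  "Ph grid u t = u (grid (THE i. grid i \<le> t \<and> t < grid (Suc i)))"

end

theory Submission
  imports Defs "HOL-Combinatorics.Multiset_Permutations"
begin

text \<open>
  For fixed t the k-th Adomian polynomial is \<open>1/k!\<close> times the k-th derivative at 0 of
  \<open>\<tau> \<mapsto> N t (\<Sum>i\<le>k. \<tau>^i u_i)\<close>.  Differentiating repeatedly (chain and product rule,
  i.e. Faa di Bruno) produces a tree of terms \<open>D^j N(V_0 \<tau>)[V_{m_1} \<tau>, ..., V_{m_j} \<tau>]\<close>,
  where \<open>V_p\<close> is the p-th derivative of the polynomial curve; a node is encoded by the list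
  of the orders \<open>m_r\<close>.  Replacing the differential \<open>D^j N\<close> by the scalar majorant \<open>Nt^(j)\<close>
  and each vector by a bound for its norm gives a tree with the same branching whose value is
  the corresponding derivative of \<open>\<tau> \<mapsto> Nt (\<Sum>i\<le>k. \<tau>^i x_i)\<close>, so comparing the trees
  node by node compares the Adomian polynomials.
\<close>

lemma norm_increment_le:
  fixes f :: "real \<Rightarrow> 'b::real_normed_vector"
  assumes "a \<le> b"
    and deriv: "\<And>x. x \<in> {a..b} \<Longrightarrow> (f has_vector_derivative f' x) (at x within {a..b})"
    and bound: "\<And>x. x \<in> {a..b} \<Longrightarrow> norm (f' x) \<le> B"
  shows "norm (f b - f a) \<le> B * (b - a)"
proof -
  have "norm (f b - f a) \<le> B * norm (b - a)"
  proof (rule differentiable_bound[where S="{a..b}" and f'="\<lambda>x h. h *\<^sub>R f' x"])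
    fix x assume x: "x \<in> {a..b}"
    show "(f has_derivative (\<lambda>h. h *\<^sub>R f' x)) (at x within {a..b})"
      using deriv[OF x] unfolding has_vector_derivative_def .
    show "onorm (\<lambda>h. h *\<^sub>R f' x) \<le> B"
      using bound[OF x] by (simp add: onorm_scaleR_left onorm_id)
  qed (use assms in auto)
  then show ?thesis using assms by simp
qed

lemma line_derivative:
  fixes G :: "'a::real_normed_vector \<Rightarrow> 'b::real_normed_vector"
  assumes "\<And>u. ((\<lambda>s. G (u + s *\<^sub>R e)) has_vector_derivative G' u) (at 0)"
  shows "((\<lambda>s. G (w + s *\<^sub>R e)) has_vector_derivative G' (w + r *\<^sub>R e)) (at r)"
proof -
  have "((\<lambda>s. G ((w + r *\<^sub>R e) + s *\<^sub>R e)) \<circ> (\<lambda>s. s - r) has_vector_derivative 1 *\<^sub>R G' (w + r *\<^sub>R e)) (at r)"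
    by (rule vector_diff_chain_at) (use assms[of "w + r *\<^sub>R e"] in \<open>auto intro!: derivative_eq_intros\<close>)
  moreover have "(\<lambda>s. G ((w + r *\<^sub>R e) + s *\<^sub>R e)) \<circ> (\<lambda>s. s - r) = (\<lambda>s. G (w + s *\<^sub>R e))"
    by (auto simp: o_def algebra_simps)
  ultimately show ?thesis by simp
qed

lemma increment_along_axis:
  fixes G :: "real^'m \<Rightarrow> 'b::real_normed_vector"
  assumes D: "\<And>w. ((\<lambda>s. G (w + s *\<^sub>R axis i 1)) has_vector_derivative G' w) (at 0)"
    and B: "\<And>r. \<bar>r\<bar> \<le> \<bar>c\<bar> \<Longrightarrow> norm (G' (p + r *\<^sub>R axis i 1) - L) \<le> \<epsilon>"
  shows "norm (G (p + c *\<^sub>R axis i 1) - G p - c *\<^sub>R L) \<le> \<epsilon> * \<bar>c\<bar>"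
proof -
  define f where "f r = G (p + r *\<^sub>R axis i 1) - r *\<^sub>R L" for r
  have f': "(f has_vector_derivative G' (p + r *\<^sub>R axis i 1) - L) (at r within S)" for r S
    unfolding f_def
    by (rule has_vector_derivative_at_within) (rule derivative_eq_intros line_derivative[OF D] | simp)+
  have "norm (f c - f 0) \<le> \<epsilon> * \<bar>c\<bar>"
  proof (cases "0 \<le> c")
    case True
    have "norm (f c - f 0) \<le> \<epsilon> * (c - 0)"
      by (rule norm_increment_le[OF True f' B]) (use True in auto)
    then show ?thesis using True by simp
  next
    case False
    have "norm (f 0 - f c) \<le> \<epsilon> * (0 - c)"
      by (rule norm_increment_le[OF _ f' B]) (use False in auto)
    then show ?thesis using False by (simp add: norm_minus_commute)
  qed
  then show ?thesis by (simp add: f_def algebra_simps)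
qed

lemma axis_sum_component:
  "(\<Sum>k\<in>S. c k *\<^sub>R axis k (1::real)) $ m = (if m \<in> S then c m else (0::real))"
  by (cases "finite S") (auto simp: axis_def if_distrib cong: if_cong)

text \<open>Moving one coordinate at a time from u to \<open>u + h\<close>: if all partial derivatives stay
  within \<open>\<epsilon>\<close> of their value at u, the linearization error is at most \<open>\<epsilon> \<Sum>|h_k|\<close>.\<close>

lemma telescoping_partials:
  fixes G :: "real^'m \<Rightarrow> 'b::real_normed_vector" and h :: "real^'m"
  assumes D: "\<And>i u. ((\<lambda>s. G (u + s *\<^sub>R axis i 1)) has_vector_derivative Gs i u) (at 0)"
    and close: "\<And>i w. dist w u < d \<Longrightarrow> norm (Gs i w - Gs i u) \<le> \<epsilon>"
    and h: "norm h < d"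
  shows "norm (G (u + (\<Sum>k\<in>S. h$k *\<^sub>R axis k 1)) - G u - (\<Sum>k\<in>S. h$k *\<^sub>R Gs k u))
           \<le> \<epsilon> * (\<Sum>k\<in>S. \<bar>h$k\<bar>)"
proof (induction S rule: finite_induct[OF finite])
  case (2 i S)
  define p where "p = u + (\<Sum>k\<in>S. h$k *\<^sub>R axis k 1)"
  have step: "norm (G (p + h$i *\<^sub>R axis i 1) - G p - h$i *\<^sub>R Gs i u) \<le> \<epsilon> * \<bar>h$i\<bar>"
  proof (rule increment_along_axis[OF D])
    fix r :: real assume r: "\<bar>r\<bar> \<le> \<bar>h$i\<bar>"
    have "norm (p + r *\<^sub>R axis i 1 - u) \<le> norm h"
    proof (rule norm_le_componentwise_cart)
      fix m
      have "(p + r *\<^sub>R axis i 1 - u) $ m = (\<Sum>k\<in>S. h$k *\<^sub>R axis k 1) $ m + r * axis i 1 $ m"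
        by (simp add: p_def)
      also have "\<dots> = (if m \<in> S then h$m else 0) + (if m = i then r else 0)"
        unfolding axis_sum_component by (simp add: axis_def)
      finally have "(p + r *\<^sub>R axis i 1 - u) $ m = (if m \<in> S then h$m else 0) + (if m = i then r else 0)" .
      then show "norm ((p + r *\<^sub>R axis i 1 - u) $ m) \<le> norm (h $ m)"
        using 2(2) r by auto
    qed
    with h show "norm (Gs i (p + r *\<^sub>R axis i 1) - Gs i u) \<le> \<epsilon>"
      by (intro close) (simp add: dist_norm)
  qed
  have "G (u + (\<Sum>k\<in>insert i S. h$k *\<^sub>R axis k 1)) - G u - (\<Sum>k\<in>insert i S. h$k *\<^sub>R Gs k u)
      = (G (p + h$i *\<^sub>R axis i 1) - G p - h$i *\<^sub>R Gs i u)
        + (G (u + (\<Sum>k\<in>S. h$k *\<^sub>R axis k 1)) - G u - (\<Sum>k\<in>S. h$k *\<^sub>R Gs k u))"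
    using 2(1,2) by (simp add: p_def algebra_simps)
  also have "norm \<dots> \<le> \<epsilon> * \<bar>h$i\<bar> + \<epsilon> * (\<Sum>k\<in>S. \<bar>h$k\<bar>)"
    by (rule norm_triangle_le) (use step 2(3) in linarith)
  finally show ?case
    using 2(1,2) by (simp add: distrib_left)
qed simp

lemma has_derivative_from_partials:
  fixes G :: "real^'m \<Rightarrow> 'b::real_normed_vector"
  assumes D: "\<And>i u. ((\<lambda>s. G (u + s *\<^sub>R axis i 1)) has_vector_derivative Gs i u) (at 0)"
    and C: "\<And>i. continuous_on UNIV (Gs i)"
  shows "(G has_derivative (\<lambda>h. \<Sum>i\<in>UNIV. h$i *\<^sub>R Gs i u)) (at u)"
  unfolding has_derivative_at_alt
proof (intro conjI allI impI)
  show "bounded_linear (\<lambda>h. \<Sum>i\<in>UNIV. h$i *\<^sub>R Gs i u)"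
    by (intro bounded_linear_sum bounded_linear_compose[OF bounded_linear_scaleR_left] bounded_linear_vec_nth)
  fix e :: real assume e: "e > 0"
  define \<epsilon> where "\<epsilon> = e / real CARD('m)"
  have "\<forall>\<^sub>F w in at u. \<forall>i. dist (Gs i w) (Gs i u) < \<epsilon>"
    using C e by (intro eventually_all_finite tendstoD)
      (auto simp: \<epsilon>_def continuous_on_eq_continuous_at isCont_def)
  then obtain d where d: "d > 0" and close0: "\<And>w i. w \<noteq> u \<Longrightarrow> dist w u < d \<Longrightarrow> dist (Gs i w) (Gs i u) < \<epsilon>"
    unfolding eventually_at by auto
  have close: "norm (Gs i w - Gs i u) \<le> \<epsilon>" if "dist w u < d" for w i
  proof (cases "w = u")
    case False
    then show ?thesis using close0[OF False that, of i] by (simp add: dist_norm)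
  qed (use e in \<open>simp add: \<epsilon>_def\<close>)
  show "\<exists>d>0. \<forall>y. norm (y - u) < d \<longrightarrow>
      norm (G y - G u - (\<Sum>i\<in>UNIV. (y - u)$i *\<^sub>R Gs i u)) \<le> e * norm (y - u)"
  proof (intro exI[of _ d] conjI allI impI d)
    fix y assume y: "norm (y - u) < d"
    have y_eq: "u + (\<Sum>k\<in>UNIV. (y - u)$k *\<^sub>R axis k 1) = y"
      unfolding vec_eq_iff vector_add_component axis_sum_component[of "\<lambda>k. (y - u)$k" UNIV] by simp
    have "(\<Sum>k\<in>UNIV. \<bar>(y - u)$k\<bar>) \<le> real CARD('m) * norm (y - u)"
      using sum_bounded_above[of UNIV "\<lambda>k. \<bar>(y - u)$k\<bar>" "norm (y - u)"]
        component_le_norm_cart[of "y - u"] by simp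
    then have "\<epsilon> * (\<Sum>k\<in>UNIV. \<bar>(y - u)$k\<bar>) \<le> e * norm (y - u)"
      using e by (simp add: \<epsilon>_def field_simps)
    with telescoping_partials[OF D close y, of UNIV]
    show "norm (G y - G u - (\<Sum>i\<in>UNIV. (y - u)$i *\<^sub>R Gs i u)) \<le> e * norm (y - u)"
      unfolding y_eq by linarith
  qed
qed

lemma second_difference_bound:
  fixes G :: "real^'m \<Rightarrow> 'b::real_normed_vector"
  assumes DG: "\<And>w. ((\<lambda>s. G (w + s *\<^sub>R axis i 1)) has_vector_derivative Gi w) (at 0)"
    and DGi: "\<And>w. ((\<lambda>s. Gi (w + s *\<^sub>R axis j 1)) has_vector_derivative Gji w) (at 0)"
    and s: "0 \<le> s"
    and close: "\<And>r q. \<bar>r\<bar> \<le> s \<Longrightarrow> \<bar>q\<bar> \<le> s \<Longrightarrow>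
      norm (Gji (u + r *\<^sub>R axis i 1 + q *\<^sub>R axis j 1) - Gji u) \<le> \<epsilon>"
  shows "norm (G (u + s *\<^sub>R axis i 1 + s *\<^sub>R axis j 1) - G (u + s *\<^sub>R axis i 1)
      - G (u + s *\<^sub>R axis j 1) + G u - (s * s) *\<^sub>R Gji u) \<le> \<epsilon> * (s * s)"
proof -
  have inner: "norm (Gi (u + r *\<^sub>R axis i 1 + s *\<^sub>R axis j 1) - Gi (u + r *\<^sub>R axis i 1) - s *\<^sub>R Gji u)
      \<le> \<epsilon> * s" if r: "\<bar>r\<bar> \<le> \<bar>s\<bar>" for r
    using increment_along_axis[OF DGi, of s "u + r *\<^sub>R axis i 1" "Gji u" \<epsilon>] close r s by simp
  have DG2: "((\<lambda>r. G (w + r *\<^sub>R axis i 1 + s *\<^sub>R axis j 1) - G (w + r *\<^sub>R axis i 1))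
      has_vector_derivative Gi (w + s *\<^sub>R axis j 1) - Gi w) (at 0)" for w
    using has_vector_derivative_diff[OF DG[of "w + s *\<^sub>R axis j 1"] DG[of w]] by (simp add: add_ac)
  have "norm ((G (u + s *\<^sub>R axis i 1 + s *\<^sub>R axis j 1) - G (u + s *\<^sub>R axis i 1))
      - (G (u + s *\<^sub>R axis j 1) - G u) - s *\<^sub>R (s *\<^sub>R Gji u)) \<le> (\<epsilon> * s) * \<bar>s\<bar>" (is "norm ?lhs \<le> _")
    by (rule increment_along_axis[where G="\<lambda>w. G (w + s *\<^sub>R axis j 1) - G w", OF DG2])
      (use inner in \<open>simp add: add_ac\<close>)
  moreover have "?lhs = G (u + s *\<^sub>R axis i 1 + s *\<^sub>R axis j 1) - G (u + s *\<^sub>R axis i 1)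
      - G (u + s *\<^sub>R axis j 1) + G u - (s * s) *\<^sub>R Gji u"
    by simp
  ultimately show ?thesis
    using s by (metis abs_of_nonneg mult.assoc)
qed

lemma partials_commute:
  fixes G :: "real^'m \<Rightarrow> 'b::real_normed_vector"
  assumes DGi: "\<And>w. ((\<lambda>s. G (w + s *\<^sub>R axis i 1)) has_vector_derivative Gi w) (at 0)"
    and DGj: "\<And>w. ((\<lambda>s. G (w + s *\<^sub>R axis j 1)) has_vector_derivative Gj w) (at 0)"
    and DGji: "\<And>w. ((\<lambda>s. Gi (w + s *\<^sub>R axis j 1)) has_vector_derivative Gji w) (at 0)"
    and DGij: "\<And>w. ((\<lambda>s. Gj (w + s *\<^sub>R axis i 1)) has_vector_derivative Gij w) (at 0)"
    and C: "continuous_on UNIV Gji" "continuous_on UNIV Gij"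
  shows "Gji u = Gij u"
proof -
  have small: "norm (Gji u - Gij u) \<le> 2 * \<epsilon>" if e: "\<epsilon> > 0" for \<epsilon>
  proof -
    obtain d1 d2 where d: "d1 > 0" "d2 > 0"
      and close: "\<And>w. dist w u < d1 \<Longrightarrow> dist (Gji w) (Gji u) < \<epsilon>"
        "\<And>w. dist w u < d2 \<Longrightarrow> dist (Gij w) (Gij u) < \<epsilon>"
      using C e unfolding continuous_on_eq_continuous_at[OF open_UNIV] continuous_at_eps_delta by blast
    define s where "s = min d1 d2 / 4"
    have s: "0 < s" using d by (simp add: s_def)
    have near: "dist (u + r *\<^sub>R axis k 1 + q *\<^sub>R axis l 1) u < min d1 d2"
      if "\<bar>r\<bar> \<le> s" "\<bar>q\<bar> \<le> s" for r q and k l :: 'm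
      using that norm_triangle_ineq[of "r *\<^sub>R axis k 1 :: real^'m" "q *\<^sub>R axis l 1"] d
      by (simp add: dist_norm s_def)
    define \<Delta> where "\<Delta> = G (u + s *\<^sub>R axis i 1 + s *\<^sub>R axis j 1) - G (u + s *\<^sub>R axis i 1)
      - G (u + s *\<^sub>R axis j 1) + G u"
    have a: "norm (\<Delta> - (s * s) *\<^sub>R Gji u) \<le> \<epsilon> * (s * s)"
      unfolding \<Delta>_def using close(1) near s
      by (intro second_difference_bound[OF DGi DGji]) (auto simp: dist_norm less_imp_le)
    have "norm (G (u + s *\<^sub>R axis j 1 + s *\<^sub>R axis i 1) - G (u + s *\<^sub>R axis j 1)
        - G (u + s *\<^sub>R axis i 1) + G u - (s * s) *\<^sub>R Gij u) \<le> \<epsilon> * (s * s)"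
      using close(2) near s
      by (intro second_difference_bound[OF DGj DGij]) (auto simp: dist_norm less_imp_le)
    then have b: "norm (\<Delta> - (s * s) *\<^sub>R Gij u) \<le> \<epsilon> * (s * s)"
      by (simp add: \<Delta>_def algebra_simps)
    have eq: "(s * s) *\<^sub>R (Gji u - Gij u) = (\<Delta> - (s * s) *\<^sub>R Gij u) - (\<Delta> - (s * s) *\<^sub>R Gji u)"
      by (simp add: scaleR_diff_right)
    have "(s * s) * norm (Gji u - Gij u) = norm ((\<Delta> - (s * s) *\<^sub>R Gij u) - (\<Delta> - (s * s) *\<^sub>R Gji u))"
      unfolding eq[symmetric] using s by simp
    also have "\<dots> \<le> \<epsilon> * (s * s) + \<epsilon> * (s * s)"
      by (rule order_trans[OF norm_triangle_ineq4 add_mono[OF b a]])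
    finally show ?thesis using s by (simp add: algebra_simps)
  qed
  have "norm (Gji u - Gij u) \<le> 0 + e" if "e > 0" for e
    using small[of "e / 2"] that by simp
  then have "norm (Gji u - Gij u) \<le> 0"
    by (rule field_le_epsilon)
  then show ?thesis by simp
qed

lemma bounded_linear_matrix_apply: "bounded_linear (\<lambda>A::real^'m^'n. A *v x)"
proof -
  have "linear (\<lambda>A::real^'m^'n. A *v x)"
    by (rule linearI) (simp_all add: matrix_vector_mult_add_rdistrib scaleR_matrix_vector_assoc)
  then show ?thesis by (simp add: linear_conv_bounded_linear)
qed

lemma mat_norm_nonneg: "0 \<le> mat_norm M"
  unfolding mat_norm_def by (rule onorm_pos_le) simp

lemma mat_norm_mult_vec: "norm (A *v x) \<le> mat_norm A * norm x"
  unfolding mat_norm_def by (rule onorm) simp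

lemma mat_norm_triangle: "mat_norm (A + B) \<le> mat_norm A + mat_norm B"
  unfolding mat_norm_def matrix_vector_mult_add_rdistrib by (rule onorm_triangle) simp_all

lemma mat_norm_zero: "mat_norm 0 = 0"
  by (simp add: mat_norm_def onorm_zero)

lemma mat_norm_scaleR: "mat_norm (c *\<^sub>R A) = \<bar>c\<bar> * mat_norm A"
  using onorm_scaleR[of "\<lambda>x. A *v x" c] unfolding mat_norm_def
  by (simp add: scaleR_matrix_vector_assoc)

lemma mat_norm_sum: "mat_norm (\<Sum>i\<in>S. f i) \<le> (\<Sum>i\<in>S. mat_norm (f i))"
proof (induction S rule: infinite_finite_induct)
  case (insert x F)
  then show ?case using mat_norm_triangle[of "f x" "sum f F"] by simp
qed (simp_all add: mat_norm_zero)

lemma mat_norm_increment_le: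
  fixes \<phi> :: "real \<Rightarrow> real^'m^'m"
  assumes deriv: "\<And>s. s \<in> {0..1} \<Longrightarrow> (\<phi> has_vector_derivative \<phi>' s) (at s)"
    and bound: "\<And>s. s \<in> {0..1} \<Longrightarrow> mat_norm (\<phi>' s) \<le> M"
  shows "mat_norm (\<phi> 1 - \<phi> 0) \<le> M"
  unfolding mat_norm_def
proof (rule onorm_le)
  fix x :: "real^'m"
  have "norm (\<phi> 1 *v x - \<phi> 0 *v x) \<le> (M * norm x) * (1 - 0)"
  proof (rule norm_increment_le)
    fix s :: real assume s: "s \<in> {0..1}"
    show "((\<lambda>s. \<phi> s *v x) has_vector_derivative \<phi>' s *v x) (at s within {0..1})"
      by (rule has_vector_derivative_at_within,
          rule bounded_linear.has_vector_derivative[OF bounded_linear_matrix_apply deriv[OF s]])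
    show "norm (\<phi>' s *v x) \<le> M * norm x"
      using mat_norm_mult_vec[of "\<phi>' s" x] bound[OF s] by (meson mult_right_mono norm_ge_zero order_trans)
  qed simp
  then show "norm ((\<phi> 1 - \<phi> 0) *v x) \<le> M * norm x" by (simp add: matrix_vector_mult_diff_rdistrib)
qed

lemma partials_append: "partials (p @ q) F = partials p (partials q F)"
  by (induction p) auto

lemma length_eq_sum_count: "length is = (\<Sum>i\<in>(UNIV::'m::finite set). count (mset is) i)"
proof (induction "is")
  case (Cons a xs)
  have "(\<Sum>i\<in>(UNIV::'m set). count (mset (a # xs)) i)
      = (\<Sum>i\<in>UNIV. count (mset xs) i + (if i = a then 1 else 0))"
    by (intro sum.cong) auto
  then show ?case using Cons by (simp add: sum.distrib)
qed simp

lemma finite_lists_of_length: "finite {is::'m::finite list. length is = j}"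
  using finite_lists_length_eq[of "UNIV::'m set" j] by simp

lemma finite_multi_indices: "finite {\<kappa>::'m::finite \<Rightarrow> nat. (\<Sum>i\<in>UNIV. \<kappa> i) = j}"
proof (rule finite_subset[OF _ finite_PiE[of UNIV "\<lambda>_. {..j}"]])
  show "{\<kappa>::'m \<Rightarrow> nat. (\<Sum>i\<in>UNIV. \<kappa> i) = j} \<subseteq> PiE UNIV (\<lambda>_. {..j})"
  proof
    fix \<kappa> :: "'m \<Rightarrow> nat" assume "\<kappa> \<in> {\<kappa>. (\<Sum>i\<in>UNIV. \<kappa> i) = j}"
    then have "\<kappa> i \<le> j" for i using member_le_sum[of i UNIV \<kappa>] by simp
    then show "\<kappa> \<in> PiE UNIV (\<lambda>_. {..j})" by (simp add: PiE_UNIV_domain)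
  qed
qed auto

lemma card_lists_with_counts:
  fixes \<kappa> :: "'m::finite \<Rightarrow> nat"
  shows "real (card {is::'m list. \<forall>i. count (mset is) i = \<kappa> i})
      = fact (\<Sum>i\<in>UNIV. \<kappa> i) / (\<Prod>i\<in>UNIV. fact (\<kappa> i))"
proof -
  define M where "M = (\<Sum>i\<in>UNIV. replicate_mset (\<kappa> i) i)"
  have count_M: "count M i = \<kappa> i" for i unfolding M_def by (simp add: count_sum)
  have set_eq: "{is::'m list. \<forall>i. count (mset is) i = \<kappa> i} = permutations_of_multiset M"
    by (auto simp: permutations_of_multiset_def multiset_eq_iff count_M)
  have size_M: "size M = (\<Sum>i\<in>UNIV. \<kappa> i)"
    by (simp add: M_def size_multiset_sum)
  have "(\<Prod>x\<in>set_mset M. fact (\<kappa> x)) = (\<Prod>i\<in>UNIV. fact (\<kappa> i) :: nat)"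
    by (rule prod.mono_neutral_left) (auto simp: not_in_iff simp flip: count_M)
  then have prod_M: "(\<Prod>x\<in>set_mset M. fact (count M x)) = (\<Prod>i\<in>UNIV. fact (\<kappa> i) :: nat)"
    by (simp add: count_M)
  have "(\<Prod>i\<in>UNIV. fact (\<kappa> i) :: nat) dvd fact (\<Sum>i\<in>UNIV. \<kappa> i)"
    using card_permutations_of_multiset(2)[of M] unfolding size_M prod_M .
  then show ?thesis
    unfolding set_eq card_permutations_of_multiset(1) size_M prod_M
    by (simp add: real_of_nat_div of_nat_prod)
qed

locale smooth_partials =
  fixes F :: "real^'m \<Rightarrow> 'b::real_normed_vector" and n :: nat
  assumes partial_deriv: "\<And>is u i. length is < n \<Longrightarrow>
      ((\<lambda>s. partials is F (u + s *\<^sub>R axis i 1)) has_vector_derivative partials (i # is) F u) (at 0)"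
    and partials_cont: "\<And>is. 1 \<le> length is \<Longrightarrow> length is \<le> n \<Longrightarrow> continuous_on UNIV (partials is F)"
begin

text \<open>By Schwarz's theorem, adjacent indices can be swapped, hence iterated partials of order at
  most n only depend on the multiset of differentiation indices.\<close>

lemma partials_swap:
  assumes "length (p @ i # j # q) \<le> n"
  shows "partials (p @ i # j # q) F = partials (p @ j # i # q) F"
proof -
  have "partials (j # i # q) F u = partials (i # j # q) F u" for u
    by (rule partials_commute[where G="partials q F" and Gi="partials (i # q) F"
          and Gj="partials (j # q) F" and ?i=i and ?j=j];
        rule partial_deriv partials_cont; use assms in simp)
  then have "partials (i # j # q) F = partials (j # i # q) F" by auto
  then show ?thesis by (simp only: partials_append[of p] append_Cons append_Nil)
qed

lemma partials_move_front:
  "length (p @ x # q) \<le> n \<Longrightarrow> partials (p @ x # q) F = partials (x # p @ q) F"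
proof (induction p)
  case (Cons y p)
  then have "partials ((y # p) @ x # q) F = partials ([] @ y # x # p @ q) F"
    by simp
  also have "\<dots> = partials ([] @ x # y # p @ q) F"
    by (rule partials_swap) (use Cons.prems in simp)
  finally show ?case by simp
qed simp

lemma partials_perm:
  "mset is = mset is' \<Longrightarrow> length is \<le> n \<Longrightarrow> partials is F = partials is' F"
proof (induction "is" arbitrary: is')
  case (Cons x r)
  have "x \<in> set is'" using Cons.prems(1) by (metis list.set_intros(1) set_mset_mset)
  then obtain p q where pq: "is' = p @ x # q" by (meson split_list)
  have "length is' = length (x # r)" using Cons.prems(1) by (metis size_mset)
  then have "partials is' F = partial_u x (partials (p @ q) F)"
    using Cons.prems(2) partials_move_front[of p x q] by (simp add: pq)
  moreover have "partials r F = partials (p @ q) F"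
    using Cons pq by simp
  ultimately show ?case by simp
qed simp

lemma mixed_partial_eq:
  assumes "length is \<le> n"
  shows "mixed_partial (\<lambda>i. count (mset is) i) F = partials is F"
proof -
  let ?P = "\<lambda>is'. \<forall>i. count (mset is') i = count (mset is) i"
  have "?P (SOME is'. ?P is')" by (rule someI[of ?P "is"]) simp
  then have "mset (SOME is'. ?P is') = mset is" by (simp add: multiset_eq_iff)
  then show ?thesis
    unfolding mixed_partial_def using partials_perm assms by (metis size_mset)
qed

lemma sum_partials_by_multi_index:
  fixes \<phi> :: "'b \<Rightarrow> real"
  assumes j: "j \<le> n"
  shows "(\<Sum>is\<in>{is::'m list. length is = j}. \<phi> (partials is F u))
    = (\<Sum>\<kappa>\<in>{\<kappa>. (\<Sum>i\<in>UNIV. \<kappa> i) = j}. (fact j / (\<Prod>i\<in>UNIV. fact (\<kappa> i))) * \<phi> (mixed_partial \<kappa> F u))"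
proof -
  define cnt where "cnt is = (\<lambda>i. count (mset is) i)" for "is" :: "'m list"
  have cnt_length: "(\<Sum>i\<in>UNIV. cnt is i) = length is" for "is"
    by (simp add: cnt_def length_eq_sum_count)
  have "(\<Sum>is\<in>{is::'m list. length is = j}. \<phi> (partials is F u))
      = (\<Sum>\<kappa>\<in>{\<kappa>. (\<Sum>i\<in>UNIV. \<kappa> i) = j}. \<Sum>is\<in>{is\<in>{is. length is = j}. cnt is = \<kappa>}. \<phi> (partials is F u))"
    by (rule sum.group[symmetric]) (auto simp: finite_lists_of_length finite_multi_indices cnt_length)
  also have "\<dots> = (\<Sum>\<kappa>\<in>{\<kappa>. (\<Sum>i\<in>UNIV. \<kappa> i) = j}. (fact j / (\<Prod>i\<in>UNIV. fact (\<kappa> i))) * \<phi> (mixed_partial \<kappa> F u))"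
  proof (rule sum.cong[OF refl])
    fix \<kappa> :: "'m \<Rightarrow> nat" assume \<kappa>: "\<kappa> \<in> {\<kappa>. (\<Sum>i\<in>UNIV. \<kappa> i) = j}"
    have "length is = j" if "\<forall>i. count (mset is) i = \<kappa> i" for "is"
      using \<kappa> length_eq_sum_count[of "is"] that by simp
    then have lists_eq: "{is\<in>{is. length is = j}. cnt is = \<kappa>} = {is. \<forall>i. count (mset is) i = \<kappa> i}"
      by (auto simp: cnt_def fun_eq_iff)
    have "(\<Sum>is\<in>{is\<in>{is. length is = j}. cnt is = \<kappa>}. \<phi> (partials is F u))
        = (\<Sum>is\<in>{is\<in>{is. length is = j}. cnt is = \<kappa>}. \<phi> (mixed_partial \<kappa> F u))"
      using j mixed_partial_eq by (intro sum.cong) (auto simp: cnt_def)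
    also have "\<dots> = (fact j / (\<Prod>i\<in>UNIV. fact (\<kappa> i))) * \<phi> (mixed_partial \<kappa> F u)"
      unfolding lists_eq using card_lists_with_counts[of \<kappa>] \<kappa> by simp
    finally show "(\<Sum>is\<in>{is\<in>{is. length is = j}. cnt is = \<kappa>}. \<phi> (partials is F u))
        = (fact j / (\<Prod>i\<in>UNIV. fact (\<kappa> i))) * \<phi> (mixed_partial \<kappa> F u)" .
  qed
  finally show ?thesis .
qed

lemma partials_chain:
  assumes "length is < n" and Z: "(Z has_vector_derivative Z') (at \<tau>)"
  shows "((\<lambda>t. partials is F (Z t)) has_vector_derivative
      (\<Sum>i\<in>UNIV. Z' $ i *\<^sub>R partials (i # is) F (Z \<tau>))) (at \<tau>)"
proof -
  have "(partials is F has_derivative (\<lambda>h. \<Sum>i\<in>UNIV. h $ i *\<^sub>R partials (i # is) F (Z \<tau>))) (at (Z \<tau>))"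
    by (rule has_derivative_from_partials[where Gs="\<lambda>i. partials (i # is) F"];
        rule partial_deriv partials_cont; use assms in simp)
  from diff_chain_at[OF Z[unfolded has_vector_derivative_def] this] show ?thesis
    by (simp add: has_vector_derivative_def o_def scaleR_sum_right)
qed

end

text \<open>The j-th differential of F at u, applied to the directions a 0, ..., a (j - 1),
  written in coordinates.\<close>

definition diff_form :: "(real^'m \<Rightarrow> 'b::real_normed_vector) \<Rightarrow> nat \<Rightarrow> real^'m \<Rightarrow> (nat \<Rightarrow> real^'m) \<Rightarrow> 'b"
  where "diff_form F j u a = (\<Sum>is\<in>{is::'m list. length is = j}. (\<Prod>r<j. a r $ (is!r)) *\<^sub>R partials is F u)"

lemma diff_form_0 [simp]: "diff_form F 0 u a = F u"
proof -
  have "{is::'m list. length is = 0} = {[]}" by auto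
  then show ?thesis by (simp add: diff_form_def)
qed

lemma sum_lists_Suc:
  fixes g :: "'m::finite list \<Rightarrow> 'b::comm_monoid_add"
  shows "(\<Sum>is\<in>{is. length is = Suc j}. g is) = (\<Sum>i\<in>UNIV. \<Sum>is\<in>{is. length is = j}. g (i # is))"
proof -
  have "{is::'m list. length is = Suc j} = (\<lambda>(i, is). i # is) ` (UNIV \<times> {is. length is = j})"
    by (auto simp: length_Suc_conv image_iff)
  moreover have "inj_on (\<lambda>(i, is). i # is) (UNIV \<times> {is::'m list. length is = j})"
    by (auto simp: inj_on_def)
  ultimately show ?thesis
    by (simp add: sum.reindex sum.cartesian_product case_prod_unfold)
qed

lemma prod_lessThan_update:
  fixes j :: nat
  assumes "r < j"
  shows "(\<Prod>r'<j. f ((a(r := y)) r') r') = f y r * (\<Prod>r'\<in>{..<j} - {r}. f (a r') r')"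
proof -
  have "(\<Prod>r'<j. f ((a(r := y)) r') r') = f ((a(r := y)) r) r * (\<Prod>r'\<in>{..<j} - {r}. f ((a(r := y)) r') r')"
    by (rule prod.remove) (use assms in auto)
  also have "(\<Prod>r'\<in>{..<j} - {r}. f ((a(r := y)) r') r') = (\<Prod>r'\<in>{..<j} - {r}. f (a r') r')"
    by (rule prod.cong) auto
  finally show ?thesis by simp
qed

lemma component_derivative:
  "(f has_vector_derivative f') (at \<tau>) \<Longrightarrow> ((\<lambda>t. f t $ k) has_real_derivative f' $ k) (at \<tau>)"
  unfolding has_real_derivative_iff_has_vector_derivative
  by (rule bounded_linear.has_vector_derivative[OF bounded_linear_vec_nth])

lemma diff_form_Suc:
  "diff_form F (Suc j) u (case_nat z a) = (\<Sum>is\<in>{is::'m::finite list. length is = j}.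
      (\<Prod>r<j. a r $ (is!r)) *\<^sub>R (\<Sum>i\<in>UNIV. z $ i *\<^sub>R partials (i # is) F u))"
proof -
  have "diff_form F (Suc j) u (case_nat z a)
      = (\<Sum>i\<in>UNIV. \<Sum>is\<in>{is::'m list. length is = j}. (z $ i * (\<Prod>r<j. a r $ (is!r))) *\<^sub>R partials (i # is) F u)"
    unfolding diff_form_def sum_lists_Suc by (simp del: prod.lessThan_Suc add: prod.lessThan_Suc_shift)
  then show ?thesis
    by (subst (asm) sum.swap) (simp add: scaleR_sum_right mult.commute)
qed

lemma sum_diff_form_update:
  "(\<Sum>r<j. diff_form F j u (a(r := a' r))) = (\<Sum>is\<in>{is::'m::finite list. length is = j}.
      (\<Sum>r<j. a' r $ (is!r) * (\<Prod>y\<in>{..<j} - {r}. a y $ (is!y))) *\<^sub>R partials is F u)"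
proof -
  have "(\<Sum>r<j. diff_form F j u (a(r := a' r))) = (\<Sum>r<j. \<Sum>is\<in>{is::'m list. length is = j}.
      (a' r $ (is!r) * (\<Prod>y\<in>{..<j} - {r}. a y $ (is!y))) *\<^sub>R partials is F u)"
    unfolding diff_form_def
  proof (intro sum.cong refl)
    fix r "is" assume "r \<in> {..<j}"
    then show "(\<Prod>r'<j. (a(r := a' r)) r' $ (is!r')) *\<^sub>R partials is F u
        = (a' r $ (is!r) * (\<Prod>y\<in>{..<j} - {r}. a y $ (is!y))) *\<^sub>R partials is F u"
      using prod_lessThan_update[where f="\<lambda>v r'. v $ (is!r')" and a=a and y="a' r"] by simp
  qed
  then show ?thesis
    by (subst (asm) sum.swap) (simp add: scaleR_sum_left)
qed

lemma (in smooth_partials) diff_form_chain: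
  assumes j: "j < n" and Z: "(Z has_vector_derivative Z') (at \<tau>)"
    and A: "\<And>r. r < j \<Longrightarrow> (A r has_vector_derivative A' r) (at \<tau>)"
  shows "((\<lambda>t. diff_form F j (Z t) (\<lambda>r. A r t)) has_vector_derivative
      diff_form F (Suc j) (Z \<tau>) (case_nat Z' (\<lambda>r. A r \<tau>))
      + (\<Sum>r<j. diff_form F j (Z \<tau>) ((\<lambda>r. A r \<tau>)(r := A' r)))) (at \<tau>)"
proof -
  have coeff: "((\<lambda>t. \<Prod>r<j. A r t $ (is!r)) has_real_derivative
      (\<Sum>r<j. A' r $ (is!r) * (\<Prod>y\<in>{..<j} - {r}. A y \<tau> $ (is!y)))) (at \<tau>)" for "is"
    by (rule has_field_derivative_prod) (use A in \<open>auto intro: component_derivative\<close>)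
  have "((\<lambda>t. partials is F (Z t)) has_vector_derivative
      (\<Sum>i\<in>UNIV. Z' $ i *\<^sub>R partials (i # is) F (Z \<tau>))) (at \<tau>)" if "length is = j" for "is"
    by (rule partials_chain) (use that j Z in auto)
  then have "((\<lambda>t. \<Sum>is\<in>{is. length is = j}. (\<Prod>r<j. A r t $ (is!r)) *\<^sub>R partials is F (Z t))
      has_vector_derivative (\<Sum>is\<in>{is. length is = j}.
        (\<Prod>r<j. A r \<tau> $ (is!r)) *\<^sub>R (\<Sum>i\<in>UNIV. Z' $ i *\<^sub>R partials (i # is) F (Z \<tau>))
        + (\<Sum>r<j. A' r $ (is!r) * (\<Prod>y\<in>{..<j} - {r}. A y \<tau> $ (is!y))) *\<^sub>R partials is F (Z \<tau>))) (at \<tau>)"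
    by (intro has_vector_derivative_sum has_vector_derivative_scaleR[OF coeff]) simp
  then show ?thesis
    unfolding diff_form_Suc sum_diff_form_update by (simp add: diff_form_def sum.distrib)
qed

text \<open>The scalar model of \<open>diff_form\<close>: the j-th derivative of a scalar function, given by its
  derivative sequence G, times the product of the direction lengths.\<close>

definition scalar_form :: "(nat \<Rightarrow> real \<Rightarrow> real) \<Rightarrow> nat \<Rightarrow> real \<Rightarrow> (nat \<Rightarrow> real) \<Rightarrow> real"
  where "scalar_form G j x b = G j x * (\<Prod>r<j. b r)"

lemma scalar_form_chain:
  assumes G: "\<And>x. (G j has_real_derivative G (Suc j) x) (at x)"
    and Z: "(Z has_vector_derivative Z') (at \<tau>)"
    and A: "\<And>r. r < j \<Longrightarrow> (A r has_vector_derivative A' r) (at \<tau>)"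
  shows "((\<lambda>t. scalar_form G j (Z t) (\<lambda>r. A r t)) has_vector_derivative
      scalar_form G (Suc j) (Z \<tau>) (case_nat Z' (\<lambda>r. A r \<tau>))
      + (\<Sum>r<j. scalar_form G j (Z \<tau>) ((\<lambda>r. A r \<tau>)(r := A' r)))) (at \<tau>)"
proof -
  have "((\<lambda>t. G j (Z t) * (\<Prod>r<j. A r t)) has_real_derivative
      G (Suc j) (Z \<tau>) * Z' * (\<Prod>r<j. A r \<tau>)
      + G j (Z \<tau>) * (\<Sum>r<j. A' r * (\<Prod>y\<in>{..<j} - {r}. A y \<tau>))) (at \<tau>)"
  proof -
    have "((\<lambda>t. G j (Z t)) has_real_derivative G (Suc j) (Z \<tau>) * Z') (at \<tau>)"
      by (rule DERIV_chain2[OF G]) (use Z in \<open>simp add: has_real_derivative_iff_has_vector_derivative\<close>)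
    moreover have "((\<lambda>t. \<Prod>r<j. A r t) has_real_derivative (\<Sum>r<j. A' r * (\<Prod>y\<in>{..<j} - {r}. A y \<tau>))) (at \<tau>)"
      by (rule has_field_derivative_prod) (use A in \<open>simp add: has_real_derivative_iff_has_vector_derivative\<close>)
    ultimately show ?thesis
      by (rule DERIV_mult[THEN DERIV_cong]) (simp add: algebra_simps)
  qed
  moreover have "(\<Sum>r<j. scalar_form G j (Z \<tau>) ((\<lambda>r. A r \<tau>)(r := A' r)))
      = G j (Z \<tau>) * (\<Sum>r<j. A' r * (\<Prod>y\<in>{..<j} - {r}. A y \<tau>))"
    unfolding sum_distrib_left
  proof (rule sum.cong[OF refl])
    fix r assume "r \<in> {..<j}"
    then show "scalar_form G j (Z \<tau>) ((\<lambda>r. A r \<tau>)(r := A' r))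
        = G j (Z \<tau>) * (A' r * (\<Prod>y\<in>{..<j} - {r}. A y \<tau>))"
      using prod_lessThan_update[of r j "\<lambda>v _. v" "\<lambda>r. A r \<tau>" "A' r"]
      by (simp add: scalar_form_def)
  qed
  moreover have "scalar_form G (Suc j) (Z \<tau>) (case_nat Z' (\<lambda>r. A r \<tau>))
      = G (Suc j) (Z \<tau>) * Z' * (\<Prod>r<j. A r \<tau>)"
    by (simp add: scalar_form_def prod.lessThan_Suc_shift del: prod.lessThan_Suc)
  moreover have "(\<lambda>t. scalar_form G j (Z t) (\<lambda>r. A r t)) = (\<lambda>t. G j (Z t) * (\<Prod>r<j. A r t))"
    by (simp add: scalar_form_def)
  ultimately show ?thesis
    by (simp add: has_real_derivative_iff_has_vector_derivative)
qed

lemma scalar_form_update: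
  assumes "r < j"
  shows "scalar_form G j x (b(r := h * b r)) = h * scalar_form G j x b"
  using prod_lessThan_update[OF assms, where f="\<lambda>v _. v" and a=b and y="h * b r"]
    prod.remove[of "{..<j}" r b] assms
  by (simp add: scalar_form_def)

definition deriv_seq :: "(nat \<Rightarrow> real \<Rightarrow> 'a::real_normed_vector) \<Rightarrow> bool"
  where "deriv_seq V \<longleftrightarrow> (\<forall>p \<tau>. (V p has_vector_derivative V (Suc p) \<tau>) (at \<tau>))"

text \<open>A node of the Faa di Bruno tree: the form D of order \<open>length ms\<close> at the base point
  \<open>V 0 \<tau>\<close>, applied to the derivatives \<open>V (ms!r) \<tau>\<close>.  Differentiating in \<open>\<tau>\<close> gives the sum over
  the children: a new direction \<open>V 1\<close> in front, or one direction differentiated once more.\<close>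

definition curve_form :: "(nat \<Rightarrow> 'z \<Rightarrow> (nat \<Rightarrow> 'z) \<Rightarrow> 'a) \<Rightarrow> (nat \<Rightarrow> real \<Rightarrow> 'z) \<Rightarrow> nat list \<Rightarrow> real \<Rightarrow> 'a"
  where "curve_form D V ms \<tau> = D (length ms) (V 0 \<tau>) (\<lambda>r. V (ms!r) \<tau>)"

definition fdb_children :: "nat list \<Rightarrow> nat list list"
  where "fdb_children ms = (1 # ms) # map (\<lambda>r. ms[r := Suc (ms!r)]) [0..<length ms]"

lemma length_fdb_children: "c \<in> set (fdb_children ms) \<Longrightarrow> length c \<le> Suc (length ms)"
  by (auto simp: fdb_children_def)

lemma curve_form_derivative:
  fixes D :: "nat \<Rightarrow> 'z::real_normed_vector \<Rightarrow> (nat \<Rightarrow> 'z) \<Rightarrow> 'a::real_normed_vector"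
  assumes chain: "\<And>Z Z' A A'. (Z has_vector_derivative Z') (at \<tau>) \<Longrightarrow>
      (\<And>r. r < length ms \<Longrightarrow> (A r has_vector_derivative A' r) (at \<tau>)) \<Longrightarrow>
      ((\<lambda>t. D (length ms) (Z t) (\<lambda>r. A r t)) has_vector_derivative
        D (Suc (length ms)) (Z \<tau>) (case_nat Z' (\<lambda>r. A r \<tau>))
        + (\<Sum>r<length ms. D (length ms) (Z \<tau>) ((\<lambda>r. A r \<tau>)(r := A' r)))) (at \<tau>)"
    and V: "deriv_seq V"
  shows "(curve_form D V ms has_vector_derivative (\<Sum>c\<leftarrow>fdb_children ms. curve_form D V c \<tau>)) (at \<tau>)"
proof -
  have new_child: "curve_form D V (1 # ms) \<tau> = D (Suc (length ms)) (V 0 \<tau>) (case_nat (V 1 \<tau>) (\<lambda>r. V (ms!r) \<tau>))"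
    unfolding curve_form_def by (auto intro!: arg_cong[where f="D _ _"] split: nat.split)
  have bumped_child: "curve_form D V (ms[r := Suc (ms!r)]) \<tau>
      = D (length ms) (V 0 \<tau>) ((\<lambda>r. V (ms!r) \<tau>)(r := V (Suc (ms!r)) \<tau>))" if "r < length ms" for r
    unfolding curve_form_def using that by (auto intro!: arg_cong[where f="D _ _"] simp: nth_list_update)
  have "(\<Sum>c\<leftarrow>fdb_children ms. curve_form D V c \<tau>)
      = curve_form D V (1 # ms) \<tau> + (\<Sum>r<length ms. curve_form D V (ms[r := Suc (ms!r)]) \<tau>)"
    by (simp add: fdb_children_def interv_sum_list_conv_sum_set_nat atLeast0LessThan)
  also have "\<dots> = D (Suc (length ms)) (V 0 \<tau>) (case_nat (V 1 \<tau>) (\<lambda>r. V (ms!r) \<tau>))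
      + (\<Sum>r<length ms. D (length ms) (V 0 \<tau>) ((\<lambda>r. V (ms!r) \<tau>)(r := V (Suc (ms!r)) \<tau>)))"
    unfolding new_child by (intro arg_cong2[where f="(+)"] refl sum.cong) (simp_all add: bumped_child)
  finally show ?thesis
    using chain[of "V 0" "V 1 \<tau>" "\<lambda>r. V (ms!r)" "\<lambda>r. V (Suc (ms!r)) \<tau>"] V
    by (simp add: deriv_seq_def curve_form_def[abs_def])
qed

fun tree_deriv :: "('s \<Rightarrow> 's list) \<Rightarrow> ('s \<Rightarrow> real \<Rightarrow> 'a::real_normed_vector) \<Rightarrow> nat \<Rightarrow> 's \<Rightarrow> real \<Rightarrow> 'a"
  where
    "tree_deriv kids f 0 s = f s"
  | "tree_deriv kids f (Suc p) s = (\<lambda>\<tau>. \<Sum>c\<leftarrow>kids s. tree_deriv kids f p c \<tau>)"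

lemma has_vector_derivative_sum_list:
  "(\<And>x. x \<in> set xs \<Longrightarrow> (f x has_vector_derivative f' x) (at \<tau>)) \<Longrightarrow>
    ((\<lambda>t. \<Sum>x\<leftarrow>xs. f x t) has_vector_derivative (\<Sum>x\<leftarrow>xs. f' x)) (at \<tau>)"
  by (induction xs) (auto intro: has_vector_derivative_add)

lemma sum_list_subadditive:
  fixes nrm :: "'a::monoid_add \<Rightarrow> real"
  assumes "\<And>x y. nrm (x + y) \<le> nrm x + nrm y" and "nrm 0 = 0"
  shows "nrm (\<Sum>x\<leftarrow>xs. f x) \<le> (\<Sum>x\<leftarrow>xs. nrm (f x))"
  by (induction xs) (simp_all add: assms(2), meson add_left_mono assms(1) order_trans)

lemma tree_deriv_diff:
  "tree_deriv kids (\<lambda>s \<tau>. f s \<tau> - g s \<tau>) p s = (\<lambda>\<tau>. tree_deriv kids f p s \<tau> - tree_deriv kids g p s \<tau>)"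
  by (induction p arbitrary: s) (simp_all add: sum_list_subtractf)

context
  fixes kids :: "'s \<Rightarrow> 's list" and rank :: "'s \<Rightarrow> nat" and B :: nat
  assumes rank_kids: "\<And>s c. c \<in> set (kids s) \<Longrightarrow> rank c \<le> Suc (rank s)"
begin

lemma tree_deriv_has_derivative:
  fixes f :: "'s \<Rightarrow> real \<Rightarrow> 'a::real_normed_vector"
  assumes deriv: "\<And>s \<tau>. rank s < B \<Longrightarrow> (f s has_vector_derivative (\<Sum>c\<leftarrow>kids s. f c \<tau>)) (at \<tau>)"
  shows "rank s + Suc p \<le> B \<Longrightarrow>
    (tree_deriv kids f p s has_vector_derivative tree_deriv kids f (Suc p) s \<tau>) (at \<tau>)"
proof (induction p arbitrary: s)
  case 0
  then show ?case using deriv by simp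
next
  case (Suc p)
  have "rank c + Suc p \<le> B" if "c \<in> set (kids s)" for c
    using rank_kids[OF that] Suc.prems by simp
  then have "((\<lambda>\<tau>. \<Sum>c\<leftarrow>kids s. tree_deriv kids f p c \<tau>) has_vector_derivative
      (\<Sum>c\<leftarrow>kids s. tree_deriv kids f (Suc p) c \<tau>)) (at \<tau>)"
    by (intro has_vector_derivative_sum_list Suc.IH)
  then show ?case by simp
qed

lemma vderiv_iter_tree_deriv:
  fixes f :: "'s \<Rightarrow> real \<Rightarrow> 'a::real_normed_vector"
  assumes deriv: "\<And>s \<tau>. rank s < B \<Longrightarrow> (f s has_vector_derivative (\<Sum>c\<leftarrow>kids s. f c \<tau>)) (at \<tau>)"
  shows "rank s + p \<le> B \<Longrightarrow> vderiv_iter p (f s) = tree_deriv kids f p s"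
proof (induction p)
  case (Suc p)
  then have IH: "vderiv_iter p (f s) = tree_deriv kids f p s" by simp
  show ?case
    using vector_derivative_at[OF tree_deriv_has_derivative[OF deriv Suc.prems]]
    by (simp add: IH fun_eq_iff)
qed simp

lemma tree_deriv_bound:
  fixes f :: "'s \<Rightarrow> real \<Rightarrow> 'a::real_normed_vector" and nrm :: "'a \<Rightarrow> real"
  assumes nrm: "\<And>x y. nrm (x + y) \<le> nrm x + nrm y" "nrm 0 = 0"
    and base: "\<And>s. rank s \<le> B \<Longrightarrow> nrm (f s 0) \<le> C * g s 0"
  shows "rank s + p \<le> B \<Longrightarrow> nrm (tree_deriv kids f p s 0) \<le> C * tree_deriv kids g p s 0"
proof (induction p arbitrary: s)
  case (Suc p)
  have "nrm (\<Sum>c\<leftarrow>kids s. tree_deriv kids f p c 0) \<le> (\<Sum>c\<leftarrow>kids s. nrm (tree_deriv kids f p c 0))"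
    by (rule sum_list_subadditive[OF nrm])
  also have "\<dots> \<le> (\<Sum>c\<leftarrow>kids s. C * tree_deriv kids g p c 0)"
    using rank_kids Suc by (intro sum_list_mono Suc.IH) fastforce
  finally show ?case by (simp add: sum_list_const_mult)
qed (use base in simp)

lemma vderiv_iter_diff:
  fixes f g :: "'s \<Rightarrow> real \<Rightarrow> 'a::real_normed_vector"
  assumes f_deriv: "\<And>s \<tau>. rank s < B \<Longrightarrow> (f s has_vector_derivative (\<Sum>c\<leftarrow>kids s. f c \<tau>)) (at \<tau>)"
    and g_deriv: "\<And>s \<tau>. rank s < B \<Longrightarrow> (g s has_vector_derivative (\<Sum>c\<leftarrow>kids s. g c \<tau>)) (at \<tau>)"
    and s: "rank s + p \<le> B"
  shows "vderiv_iter p (\<lambda>\<tau>. f s \<tau> - g s \<tau>) = (\<lambda>\<tau>. vderiv_iter p (f s) \<tau> - vderiv_iter p (g s) \<tau>)"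
proof -
  have "((\<lambda>s \<tau>. f s \<tau> - g s \<tau>) s has_vector_derivative (\<Sum>c\<leftarrow>kids s. f c \<tau> - g c \<tau>)) (at \<tau>)"
    if "rank s < B" for s \<tau>
    using has_vector_derivative_diff[OF f_deriv g_deriv, OF that that] by (simp add: sum_list_subtractf)
  from vderiv_iter_tree_deriv[OF this s] show ?thesis
    by (simp add: tree_deriv_diff vderiv_iter_tree_deriv[OF f_deriv s] vderiv_iter_tree_deriv[OF g_deriv s])
qed

lemma iterated_derivative_majorant:
  fixes f :: "'s \<Rightarrow> real \<Rightarrow> 'a::real_normed_vector" and g :: "'s \<Rightarrow> real \<Rightarrow> real"
    and nrm :: "'a \<Rightarrow> real"
  assumes f_deriv: "\<And>s \<tau>. rank s < B \<Longrightarrow> (f s has_vector_derivative (\<Sum>c\<leftarrow>kids s. f c \<tau>)) (at \<tau>)"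
    and g_deriv: "\<And>s \<tau>. rank s < B \<Longrightarrow> (g s has_vector_derivative (\<Sum>c\<leftarrow>kids s. g c \<tau>)) (at \<tau>)"
    and nrm: "\<And>x y. nrm (x + y) \<le> nrm x + nrm y" "nrm 0 = 0"
    and base: "\<And>s. rank s \<le> B \<Longrightarrow> nrm (f s 0) \<le> C * g s 0"
    and s: "rank s + p \<le> B"
  shows "nrm (vderiv_iter p (f s) 0) \<le> C * vderiv_iter p (g s) 0"
  using tree_deriv_bound[where nrm=nrm and f=f and g=g, OF nrm base s]
  by (simp add: vderiv_iter_tree_deriv[OF f_deriv s] vderiv_iter_tree_deriv[OF g_deriv s])

end

definition poly_curve :: "(nat \<Rightarrow> 'a::real_normed_vector) \<Rightarrow> nat \<Rightarrow> nat \<Rightarrow> real \<Rightarrow> 'a"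
  where "poly_curve v k p \<tau> = (\<Sum>i\<le>k. (if p \<le> i then fact i / fact (i - p) * \<tau> ^ (i - p) else 0) *\<^sub>R v i)"

lemma poly_curve_0: "poly_curve v k 0 \<tau> = (\<Sum>i\<le>k. \<tau> ^ i *\<^sub>R v i)"
  by (simp add: poly_curve_def)

lemma poly_curve_at_0: "poly_curve v k p 0 = (if p \<le> k then fact p *\<^sub>R v p else 0)"
proof -
  have "poly_curve v k p 0 = (\<Sum>i\<le>k. if i = p then fact p *\<^sub>R v p else 0)"
    unfolding poly_curve_def by (intro sum.cong) auto
  then show ?thesis by simp
qed

lemma monomial_derivative:
  "((\<lambda>\<tau>. if p \<le> i then fact i / fact (i - p) * \<tau> ^ (i - p) else 0 :: real) has_real_derivative
     (if Suc p \<le> i then fact i / fact (i - Suc p) * \<tau> ^ (i - Suc p) else 0)) (at \<tau>)"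
proof (cases "Suc p \<le> i")
  case True
  then obtain m where m: "i - p = Suc m" "i - Suc p = m"
    by (metis Suc_diff_Suc Suc_le_lessD)
  have "((\<lambda>\<tau>. fact i / fact (Suc m) * \<tau> ^ Suc m :: real) has_real_derivative
      fact i / fact (Suc m) * (real (Suc m) * \<tau> ^ (Suc m - Suc 0))) (at \<tau>)"
    by (intro DERIV_cmult DERIV_pow)
  moreover have "fact i / fact (Suc m) * (real (Suc m) * \<tau> ^ m) = fact i / fact m * \<tau> ^ m"
    by (simp add: fact_Suc field_simps del: of_nat_Suc)
  ultimately show ?thesis using True m by (simp del: of_nat_Suc)
next
  case False
  then show ?thesis by (cases "p \<le> i") auto
qed

lemma deriv_seq_poly_curve: "deriv_seq (poly_curve v k)"
  unfolding deriv_seq_def poly_curve_def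
proof (intro allI has_vector_derivative_sum)
  fix p i and \<tau> :: real
  show "((\<lambda>\<tau>. (if p \<le> i then fact i / fact (i - p) * \<tau> ^ (i - p) else 0) *\<^sub>R v i) has_vector_derivative
      (if Suc p \<le> i then fact i / fact (i - Suc p) * \<tau> ^ (i - Suc p) else 0) *\<^sub>R v i) (at \<tau>)"
    by (rule has_vector_derivative_eq_rhs,
        rule has_vector_derivative_scaleR[OF monomial_derivative has_vector_derivative_const]) simp
qed

lemma adomian_as_curve_form:
  assumes "\<And>z b. D 0 z b = G z"
  shows "adomian k G v = (1 / fact k) *\<^sub>R vderiv_iter k (curve_form D (poly_curve v k) []) 0"
proof -
  have "curve_form D (poly_curve v k) [] = (\<lambda>\<tau>. G (\<Sum>i\<le>k. \<tau> ^ i *\<^sub>R v i))"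
    by (simp add: fun_eq_iff curve_form_def poly_curve_0 assms)
  then show ?thesis by (simp add: adomian_def)
qed

text \<open>If \<open>G k\<close> are the derivatives of a function f, then \<open>x_times_derivs G j\<close> are the
  derivatives of \<open>x \<mapsto> x f'(x)\<close> (Leibniz rule).\<close>

definition x_times_derivs :: "(nat \<Rightarrow> real \<Rightarrow> real) \<Rightarrow> nat \<Rightarrow> real \<Rightarrow> real"
  where "x_times_derivs G j x = G (Suc j) x * x + real j * G j x"

lemma x_times_derivs_derivative:
  assumes G: "\<And>k x. k < K \<Longrightarrow> (G k has_real_derivative G (Suc k) x) (at x)" and j: "Suc j < K"
  shows "(x_times_derivs G j has_real_derivative x_times_derivs G (Suc j) x) (at x)"
proof -
  have "((\<lambda>x. G (Suc j) x * x + real j * G j x) has_real_derivative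
      G (Suc (Suc j)) x * x + G (Suc j) x * 1 + real j * G (Suc j) x) (at x)"
    using G[OF j] G[of j] j by (auto intro!: derivative_eq_intros)
  then show ?thesis
    by (simp add: x_times_derivs_def[abs_def] algebra_simps)
qed

lemma norm_convex_comb_le:
  fixes a c :: "'a::real_normed_vector"
  assumes t: "0 \<le> t" "t \<le> 1" and "norm a \<le> B" "norm c \<le> B"
  shows "norm (c + t *\<^sub>R (a - c)) \<le> B"
proof -
  have "norm (c + t *\<^sub>R (a - c)) = norm ((1 - t) *\<^sub>R c + t *\<^sub>R a)"
    by (simp add: algebra_simps)
  also have "\<dots> \<le> (1 - t) * norm c + t * norm a"
    using t norm_triangle_ineq[of "(1 - t) *\<^sub>R c" "t *\<^sub>R a"] by simp
  also have "\<dots> \<le> (1 - t) * B + t * B"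
    using assms by (intro add_mono mult_left_mono) auto
  finally show ?thesis by (simp add: algebra_simps)
qed

locale majorized = smooth_partials F n
  for F :: "real^'m \<Rightarrow> real^'m^'m" and n :: nat +
  fixes Nd :: "nat \<Rightarrow> real \<Rightarrow> real"
  assumes Nd_deriv: "\<And>k x. k < n \<Longrightarrow> (Nd k has_real_derivative Nd (Suc k) x) (at x)"
    and Nd_nonneg: "\<And>k u. k \<le> n \<Longrightarrow> 0 \<le> u \<Longrightarrow> 0 \<le> Nd k u"
    and majorant: "\<And>u k. k \<le> n \<Longrightarrow>
      (\<Sum>\<kappa>\<in>{\<kappa>::'m \<Rightarrow> nat. (\<Sum>i\<in>UNIV. \<kappa> i) = k}.
         (fact k / (\<Prod>i\<in>UNIV. fact (\<kappa> i))) * mat_norm (mixed_partial \<kappa> F u))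
      \<le> Nd k (norm u)"
begin

lemma Nd_mono:
  assumes j: "j < n" and "0 \<le> x" "x \<le> y"
  shows "Nd j x \<le> Nd j y"
proof (rule DERIV_nonneg_imp_nondecreasing[OF assms(3)])
  fix z assume "x \<le> z" "z \<le> y"
  then show "\<exists>d. (Nd j has_real_derivative d) (at z) \<and> 0 \<le> d"
    using Nd_deriv[OF j, of z] Nd_nonneg[of "Suc j" z] j assms(2) by auto
qed

lemma diff_form_bound:
  assumes j: "j < n" and u: "norm u \<le> x" and a: "\<And>r. r < j \<Longrightarrow> norm (a r) \<le> b r"
  shows "mat_norm (diff_form F j u a) \<le> scalar_form Nd j x b"
proof -
  define L where "L = {is::'m list. length is = j}"
  have b0: "0 \<le> (\<Prod>r<j. b r)"
    by (rule prod_nonneg) (meson a norm_ge_zero order_trans lessThan_iff)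
  have "mat_norm (diff_form F j u a) \<le> (\<Sum>is\<in>L. mat_norm ((\<Prod>r<j. a r $ (is!r)) *\<^sub>R partials is F u))"
    unfolding diff_form_def L_def by (rule mat_norm_sum)
  also have "\<dots> \<le> (\<Sum>is\<in>L. (\<Prod>r<j. b r) * mat_norm (partials is F u))"
  proof (rule sum_mono)
    fix "is"
    have "\<bar>\<Prod>r<j. a r $ (is!r)\<bar> \<le> (\<Prod>r<j. b r)"
      unfolding abs_prod
    proof (rule prod_mono)
      fix r assume "r \<in> {..<j}"
      then show "0 \<le> \<bar>a r $ (is!r)\<bar> \<and> \<bar>a r $ (is!r)\<bar> \<le> b r"
        using a[of r] component_le_norm_cart[of "a r" "is!r"] by simp
    qed
    then show "mat_norm ((\<Prod>r<j. a r $ (is!r)) *\<^sub>R partials is F u) \<le> (\<Prod>r<j. b r) * mat_norm (partials is F u)"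
      unfolding mat_norm_scaleR by (rule mult_right_mono) (rule mat_norm_nonneg)
  qed
  also have "\<dots> = (\<Prod>r<j. b r) * (\<Sum>is\<in>L. mat_norm (partials is F u))"
    by (simp add: sum_distrib_left)
  also have "\<dots> \<le> (\<Prod>r<j. b r) * Nd j (norm u)"
    using sum_partials_by_multi_index[where \<phi>=mat_norm and j=j and u=u] majorant[of j u] j b0
    unfolding L_def by (intro mult_left_mono) auto
  also have "\<dots> \<le> (\<Prod>r<j. b r) * Nd j x"
    using Nd_mono[OF j norm_ge_zero u] b0 by (rule mult_left_mono)
  finally show ?thesis by (simp add: scalar_form_def mult.commute)
qed

lemma diff_form_variation_bound:
  assumes j: "j + 2 \<le> n"
    and z: "norm z \<le> x" and dz: "norm z' \<le> h * x"
    and d: "\<And>r. r < j \<Longrightarrow> norm (d r) \<le> b r" and dd: "\<And>r. r < j \<Longrightarrow> norm (d' r) \<le> h * b r"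
  shows "mat_norm (diff_form F (Suc j) z (case_nat z' d) + (\<Sum>r<j. diff_form F j z (d(r := d' r))))
    \<le> h * scalar_form (x_times_derivs Nd) j x b"
proof -
  have new_direction: "mat_norm (diff_form F (Suc j) z (case_nat z' d)) \<le> Nd (Suc j) x * (h * x * (\<Prod>r<j. b r))"
    using diff_form_bound[of "Suc j" z x "case_nat z' d" "case_nat (h * x) b"] j z dz d
    by (auto simp: scalar_form_def prod.lessThan_Suc_shift split: nat.split simp del: prod.lessThan_Suc)
  have moved_direction: "mat_norm (diff_form F j z (d(r := d' r))) \<le> h * scalar_form Nd j x b"
    if r: "r < j" for r
    using diff_form_bound[of j z x "d(r := d' r)" "b(r := h * b r)"] scalar_form_update[OF r] j z d dd
    by auto
  have "mat_norm (\<Sum>r<j. diff_form F j z (d(r := d' r))) \<le> (\<Sum>r<j. mat_norm (diff_form F j z (d(r := d' r))))"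
    by (rule mat_norm_sum)
  also have "\<dots> \<le> (\<Sum>r<j. h * scalar_form Nd j x b)"
    by (rule sum_mono) (use moved_direction in simp)
  finally have moved_sum: "mat_norm (\<Sum>r<j. diff_form F j z (d(r := d' r))) \<le> real j * (h * scalar_form Nd j x b)"
    by simp
  have "mat_norm (diff_form F (Suc j) z (case_nat z' d) + (\<Sum>r<j. diff_form F j z (d(r := d' r))))
      \<le> Nd (Suc j) x * (h * x * (\<Prod>r<j. b r)) + real j * (h * scalar_form Nd j x b)"
    by (intro order_trans[OF mat_norm_triangle] add_mono new_direction moved_sum)
  also have "\<dots> = h * scalar_form (x_times_derivs Nd) j x b"
    by (simp add: scalar_form_def x_times_derivs_def ring_distribs mult_ac)
  finally show ?thesis .
qed

text \<open>Moving the base point and the directions simultaneously along segments and applying the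
  mean value inequality bounds the difference of two differential forms.\<close>

lemma diff_form_diff_bound:
  assumes j: "j + 2 \<le> n"
    and v: "norm v \<le> x" and w: "norm w \<le> x" and vw: "norm (v - w) \<le> h * x"
    and a: "\<And>r. r < j \<Longrightarrow> norm (a r) \<le> b r" and c: "\<And>r. r < j \<Longrightarrow> norm (c r) \<le> b r"
    and ac: "\<And>r. r < j \<Longrightarrow> norm (a r - c r) \<le> h * b r"
  shows "mat_norm (diff_form F j v a - diff_form F j w c) \<le> h * scalar_form (x_times_derivs Nd) j x b"
proof -
  define Z where "Z t = w + t *\<^sub>R (v - w)" for t
  define A where "A r t = c r + t *\<^sub>R (a r - c r)" for r t
  define \<phi> where "\<phi> t = diff_form F j (Z t) (\<lambda>r. A r t)" for t
  have "mat_norm (\<phi> 1 - \<phi> 0) \<le> h * scalar_form (x_times_derivs Nd) j x b"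
  proof (rule mat_norm_increment_le)
    fix s :: real assume s: "s \<in> {0..1}"
    have Z': "(Z has_vector_derivative v - w) (at s)" and A': "(A r has_vector_derivative a r - c r) (at s)" for r
      unfolding Z_def A_def by (auto intro!: derivative_eq_intros)
    show "(\<phi> has_vector_derivative diff_form F (Suc j) (Z s) (case_nat (v - w) (\<lambda>r. A r s))
        + (\<Sum>r<j. diff_form F j (Z s) ((\<lambda>r. A r s)(r := a r - c r)))) (at s)"
      unfolding \<phi>_def[abs_def] by (rule diff_form_chain[OF _ Z' A']) (use j in simp)
    show "mat_norm (diff_form F (Suc j) (Z s) (case_nat (v - w) (\<lambda>r. A r s))
        + (\<Sum>r<j. diff_form F j (Z s) ((\<lambda>r. A r s)(r := a r - c r))))
        \<le> h * scalar_form (x_times_derivs Nd) j x b"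
      by (rule diff_form_variation_bound)
        (use j vw ac s v w a c in \<open>auto simp: Z_def A_def intro: norm_convex_comb_le\<close>)
  qed
  moreover have "\<phi> 1 = diff_form F j v a" "\<phi> 0 = diff_form F j w c"
    by (simp_all add: \<phi>_def Z_def A_def)
  ultimately show ?thesis by simp
qed

lemma adomian_bound:
  assumes k: "k < n" and v: "\<And>i. i \<le> k \<Longrightarrow> norm (v i) \<le> x i"
  shows "mat_norm (adomian k F v) \<le> adomian k (Nd 0) x"
proof -
  let ?V = "poly_curve v k" and ?X = "poly_curve x k"
  have VX: "norm (?V p 0) \<le> ?X p 0" for p
    using v[of p] by (simp add: poly_curve_at_0 mult_left_mono)
  have "mat_norm (vderiv_iter k (curve_form (diff_form F) ?V []) 0)
      \<le> 1 * vderiv_iter k (curve_form (scalar_form Nd) ?X []) 0"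
  proof (rule iterated_derivative_majorant[where rank=length and kids=fdb_children and B="n - 1" and C=1])
    fix ms :: "nat list" and \<tau> :: real assume "length ms < n - 1"
    then show "(curve_form (diff_form F) ?V ms has_vector_derivative
        (\<Sum>c\<leftarrow>fdb_children ms. curve_form (diff_form F) ?V c \<tau>)) (at \<tau>)"
      and "(curve_form (scalar_form Nd) ?X ms has_vector_derivative
        (\<Sum>c\<leftarrow>fdb_children ms. curve_form (scalar_form Nd) ?X c \<tau>)) (at \<tau>)"
      by (auto intro!: curve_form_derivative diff_form_chain scalar_form_chain Nd_deriv deriv_seq_poly_curve)
  next
    fix ms :: "nat list" assume "length ms \<le> n - 1"
    then show "mat_norm (curve_form (diff_form F) ?V ms 0) \<le> 1 * curve_form (scalar_form Nd) ?X ms 0"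
      unfolding curve_form_def mult.left_neutral using k VX by (intro diff_form_bound) auto
  qed (use k in \<open>auto simp: length_fdb_children mat_norm_triangle mat_norm_zero\<close>)
  then show ?thesis
    by (simp add: adomian_as_curve_form[of "diff_form F"] adomian_as_curve_form[of "scalar_form Nd"]
        scalar_form_def mat_norm_scaleR divide_right_mono)
qed

lemma adomian_diff_bound:
  assumes k: "k + 2 \<le> n"
    and bounds: "\<And>i. i \<le> k \<Longrightarrow> norm (v i) \<le> x i \<and> norm (w i) \<le> x i \<and> norm (v i - w i) \<le> h * x i"
  shows "mat_norm (adomian k F v - adomian k F w) \<le> h * adomian k (\<lambda>y. Nd 1 y * y) x"
proof -
  let ?V = "poly_curve v k" and ?W = "poly_curve w k" and ?X = "poly_curve x k"
  have VWX: "norm (?V p 0) \<le> ?X p 0 \<and> norm (?W p 0) \<le> ?X p 0 \<and> norm (?V p 0 - ?W p 0) \<le> h * ?X p 0" for p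
    using bounds[of p] by (auto simp: poly_curve_at_0 mult_left_mono algebra_simps simp flip: scaleR_diff_right)
  let ?f = "curve_form (diff_form F)" and ?g = "curve_form (scalar_form (x_times_derivs Nd)) ?X"
  have f_deriv: "(?f U ms has_vector_derivative (\<Sum>c\<leftarrow>fdb_children ms. ?f U c \<tau>)) (at \<tau>)"
    if "length ms < n - 2" "deriv_seq U" for U ms \<tau>
    using that by (auto intro!: curve_form_derivative diff_form_chain)
  have "mat_norm (vderiv_iter k (\<lambda>\<tau>. ?f ?V [] \<tau> - ?f ?W [] \<tau>) 0) \<le> h * vderiv_iter k (?g []) 0"
  proof (rule iterated_derivative_majorant[where rank=length and kids=fdb_children and B="n - 2"
        and f="\<lambda>ms \<tau>. ?f ?V ms \<tau> - ?f ?W ms \<tau>" and g="?g"])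
    fix ms :: "nat list" and \<tau> :: real assume ms: "length ms < n - 2"
    show "((\<lambda>\<tau>. ?f ?V ms \<tau> - ?f ?W ms \<tau>) has_vector_derivative
        (\<Sum>c\<leftarrow>fdb_children ms. ?f ?V c \<tau> - ?f ?W c \<tau>)) (at \<tau>)"
      using has_vector_derivative_diff[OF f_deriv[OF ms deriv_seq_poly_curve] f_deriv[OF ms deriv_seq_poly_curve]]
      by (simp add: sum_list_subtractf)
    show "(?g ms has_vector_derivative (\<Sum>c\<leftarrow>fdb_children ms. ?g c \<tau>)) (at \<tau>)"
      using ms by (auto intro!: curve_form_derivative scalar_form_chain deriv_seq_poly_curve
          x_times_derivs_derivative[where K=n and G=Nd, OF Nd_deriv])
  next
    fix ms :: "nat list" assume "length ms \<le> n - 2"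
    then show "mat_norm (?f ?V ms 0 - ?f ?W ms 0) \<le> h * ?g ms 0"
      unfolding curve_form_def using k VWX by (intro diff_form_diff_bound) auto
  qed (use k in \<open>auto simp: length_fdb_children mat_norm_triangle mat_norm_zero\<close>)
  moreover have "vderiv_iter k (\<lambda>\<tau>. ?f ?V [] \<tau> - ?f ?W [] \<tau>) = (\<lambda>\<tau>. vderiv_iter k (?f ?V []) \<tau> - vderiv_iter k (?f ?W []) \<tau>)"
    by (rule vderiv_iter_diff[where rank=length and kids=fdb_children and B="n - 2"])
      (use k in \<open>auto simp: length_fdb_children intro: f_deriv deriv_seq_poly_curve\<close>)
  ultimately show ?thesis
    by (simp add: adomian_as_curve_form[of "diff_form F"]
        adomian_as_curve_form[of "scalar_form (x_times_derivs Nd)"] scalar_form_def x_times_derivs_def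
        mat_norm_scaleR divide_right_mono flip: scaleR_diff_right)
qed

end

lemma norm_le_norm0:
  assumes "bounded (u ` {t0..})" and "t0 \<le> s"
  shows "norm (u s) \<le> norm0 t0 u"
proof -
  have "bdd_above ((\<lambda>s. norm (u s)) ` {t0..})"
    using assms(1) by (auto simp: bounded_iff intro: bdd_aboveI2)
  then show ?thesis
    unfolding norm0_def using assms(2) by (intro cSUP_upper) auto
qed

lemma norm_deriv_le_norm1:
  assumes "bdd_above (deriv_norms grid u)" and "x \<in> {grid i..grid (Suc i)}"
  shows "norm (vector_derivative u (at x within {grid i..grid (Suc i)})) \<le> norm1 grid u"
  unfolding norm1_def by (rule cSup_upper) (use assms in \<open>auto simp: deriv_norms_def\<close>)

lemma grid_interval:
  assumes grid: "is_grid t0 grid" and t: "t0 \<le> t"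
  shows "\<exists>!i. grid i \<le> t \<and> t < grid (Suc i)"
proof -
  have mono: "strict_mono grid" and g0: "grid 0 = t0" and lim: "filterlim grid at_top sequentially"
    using grid by (auto simp: is_grid_def)
  obtain M where "t + 1 \<le> grid M"
    using lim by (auto simp: filterlim_at_top eventually_sequentially)
  then have "t < grid M" by simp
  define m where "m = (LEAST m. t < grid m)"
  have tm: "t < grid m" unfolding m_def by (rule LeastI) fact
  then obtain i where i: "m = Suc i" using g0 t by (cases m) auto
  have "\<not> t < grid i" using not_less_Least[of i "\<lambda>m. t < grid m"] unfolding m_def[symmetric] i by simp
  then have i_int: "grid i \<le> t \<and> t < grid (Suc i)" using tm i by simp
  have "i' = i" if "grid i' \<le> t \<and> t < grid (Suc i')" for i'
  proof (rule ccontr)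
    assume "i' \<noteq> i"
    then have "Suc i' \<le> i \<or> Suc i \<le> i'" by arith
    then show False
      using that i_int strict_mono_leD[OF mono] by (meson leD order_trans)
  qed
  with i_int show ?thesis by blast
qed

lemma step_h_bounds:
  assumes "is_grid t0 grid"
  shows "grid (Suc i) - grid i \<le> step_h grid" and "0 \<le> step_h grid"
proof -
  have mono: "strict_mono grid" and bdd: "bdd_above (range (\<lambda>i. grid (Suc i) - grid i))"
    using assms by (auto simp: is_grid_def)
  show le: "grid (Suc i) - grid i \<le> step_h grid" for i
    unfolding step_h_def by (rule cSUP_upper[OF _ bdd]) simp
  show "0 \<le> step_h grid"
    using le[of 0] strict_monoD[OF mono, of 0 "Suc 0"] by simp
qed

lemma V1_pointwise_bounds:
  assumes grid: "is_grid t0 grid" and u: "u \<in> V1 t0 grid" and t: "t0 \<le> t"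
  shows "norm (u t) \<le> normV t0 grid u \<and> norm (Ph grid u t) \<le> normV t0 grid u
    \<and> norm (u t - Ph grid u t) \<le> step_h grid * normV t0 grid u"
proof -
  define J where "J = (THE i. grid i \<le> t \<and> t < grid (Suc i))"
  have J: "grid J \<le> t" "t < grid (Suc J)"
    unfolding J_def using theI'[OF grid_interval[OF grid t]] by auto
  have Ph_eq: "Ph grid u t = u (grid J)" by (simp add: Ph_def J_def)
  have mono: "strict_mono grid" and "grid 0 = t0" using grid by (auto simp: is_grid_def)
  then have gJ: "t0 \<le> grid J" using strict_mono_leD[OF mono, of 0 J] by simp
  have bd: "bounded (u ` {t0..})" and bdd: "bdd_above (deriv_norms grid u)"
    and diff: "\<And>x. x \<in> {grid J..grid (Suc J)} \<Longrightarrow> u differentiable (at x within {grid J..grid (Suc J)})"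
    using u by (auto simp: V1_def)
  have "grid 0 \<in> {grid 0..grid (Suc 0)}"
    using strict_monoD[OF mono, of 0 "Suc 0"] by simp
  from norm_deriv_le_norm1[OF bdd this] have norm1_nonneg: "0 \<le> norm1 grid u"
    by (rule order_trans[OF norm_ge_zero])
  have "norm (u t - u (grid J)) \<le> norm1 grid u * (t - grid J)"
  proof (rule norm_increment_le[OF J(1)])
    fix y assume y: "y \<in> {grid J..t}"
    then have yJ: "y \<in> {grid J..grid (Suc J)}" using J by auto
    show "(u has_vector_derivative vector_derivative u (at y within {grid J..grid (Suc J)})) (at y within {grid J..t})"
      using diff[OF yJ] J by (auto simp: vector_derivative_works intro: has_vector_derivative_within_subset)
    show "norm (vector_derivative u (at y within {grid J..grid (Suc J)})) \<le> norm1 grid u"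
      by (rule norm_deriv_le_norm1[OF bdd yJ])
  qed
  also have "\<dots> \<le> norm1 grid u * step_h grid"
    using norm1_nonneg J step_h_bounds(1)[OF grid, of J] by (intro mult_left_mono) auto
  also have "\<dots> \<le> step_h grid * normV t0 grid u"
    using step_h_bounds(2)[OF grid] by (simp add: normV_def mult.commute mult_left_mono)
  finally show ?thesis
    using norm_le_norm0[OF bd t] norm_le_norm0[OF bd gJ] by (auto simp: Ph_eq normV_def)
qed

theorem lemma4:
  fixes n :: nat and t0 :: real
    and N :: "real \<Rightarrow> real^'m \<Rightarrow> real^'m^'m"
    and Nt :: "real \<Rightarrow> real"
  assumes n_pos: "n \<ge> 1"
    and N_cont_t: "\<And>u. continuous_on {t0..} (\<lambda>t. N t u)"
    and N_partials: "\<And>is t u i. length is < n \<Longrightarrow> t \<ge> t0 \<Longrightarrow>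
          ((\<lambda>s. partials is (N t) (u + s *\<^sub>R axis i 1)) has_vector_derivative
             partials (i # is) (N t) u) (at 0)"
    and N_partials_cont: "\<And>is. 1 \<le> length is \<Longrightarrow> length is \<le> n \<Longrightarrow>
          continuous_on ({t0..} \<times> UNIV) (\<lambda>(t, u). partials is (N t) u)"
    and Nt_diff: "\<And>k x. k < n \<Longrightarrow> ((deriv ^^ k) Nt has_real_derivative (deriv ^^ Suc k) Nt x) (at x)"
    and Nt_cont: "continuous_on UNIV ((deriv ^^ n) Nt)"
    and Nt_nonneg: "\<And>k u. k \<le> n \<Longrightarrow> u \<ge> 0 \<Longrightarrow> (deriv ^^ k) Nt u \<ge> 0"
    and bound: "\<And>t u k. t \<ge> t0 \<Longrightarrow> k \<le> n \<Longrightarrow>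
          (\<Sum>\<kappa>\<in>{\<kappa>::'m \<Rightarrow> nat. (\<Sum>i\<in>UNIV. \<kappa> i) = k}.
             (fact k / (\<Prod>i\<in>UNIV. fact (\<kappa> i))) * mat_norm (mixed_partial \<kappa> (N t) u))
          \<le> (deriv ^^ k) Nt (norm u)"
    and t_ge: "t \<ge> t0"
  shows "(\<forall>k < n. \<forall>us :: nat \<Rightarrow> real \<Rightarrow> real^'m. (\<forall>i\<le>k. us i \<in> V0 t0) \<longrightarrow>
            mat_norm (adomian k (N t) (\<lambda>i. us i t)) \<le> adomian k Nt (\<lambda>i. norm0 t0 (us i)))
       \<and> (\<forall>grid. is_grid t0 grid \<longrightarrow>
            (\<forall>k. k + 2 \<le> n \<longrightarrow> (\<forall>us :: nat \<Rightarrow> real \<Rightarrow> real^'m. (\<forall>i\<le>k. us i \<in> V1 t0 grid) \<longrightarrow>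
               mat_norm (adomian k (N t) (\<lambda>i. us i t) - adomian k (N t) (\<lambda>i. Ph grid (us i) t))
                 \<le> step_h grid * adomian k (\<lambda>x. deriv Nt x * x) (\<lambda>i. normV t0 grid (us i)))))"
proof -
  interpret majorized "N t" n "\<lambda>k. (deriv ^^ k) Nt"
  proof
    fix "is" :: "'m list" assume "1 \<le> length is" "length is \<le> n"
    moreover have "continuous_on UNIV (\<lambda>u::real^'m. (t, u))"
      by (intro continuous_intros)
    ultimately show "continuous_on UNIV (partials is (N t))"
      using continuous_on_compose2[OF N_partials_cont, of "is" UNIV "\<lambda>u. (t, u)"] t_ge by auto
  qed (use N_partials Nt_diff Nt_nonneg bound t_ge in auto)
  show ?thesis
  proof (intro conjI allI impI)
    fix k and us :: "nat \<Rightarrow> real \<Rightarrow> real^'m"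
    assume "k < n" and "\<forall>i\<le>k. us i \<in> V0 t0"
    then show "mat_norm (adomian k (N t) (\<lambda>i. us i t)) \<le> adomian k Nt (\<lambda>i. norm0 t0 (us i))"
      using adomian_bound[of k "\<lambda>i. us i t" "\<lambda>i. norm0 t0 (us i)"] norm_le_norm0 t_ge
      by (auto simp: V0_def)
  next
    fix grid k and us :: "nat \<Rightarrow> real \<Rightarrow> real^'m"
    assume grid: "is_grid t0 grid" and "k + 2 \<le> n" and "\<forall>i\<le>k. us i \<in> V1 t0 grid"
    then show "mat_norm (adomian k (N t) (\<lambda>i. us i t) - adomian k (N t) (\<lambda>i. Ph grid (us i) t))
        \<le> step_h grid * adomian k (\<lambda>x. deriv Nt x * x) (\<lambda>i. normV t0 grid (us i))"
      using adomian_diff_bound[where k=k and h="step_h grid" and v="\<lambda>i. us i t"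
          and w="\<lambda>i. Ph grid (us i) t" and x="\<lambda>i. normV t0 grid (us i)"]
        V1_pointwise_bounds[OF grid _ t_ge]
      by auto
  qed
qed

end
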